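(* For every $m\in\{1,\dots,L\}$, $\lambda_m^C(\mathcal{S})$ equals the maximum total workload of $\mathcal{S}$ that can be processed in the time-slot interval $[\tau_{L-m}+1,d]$ on $C$ machines, i.e. the maximum of $\sum_{T_j\in\mathcal{S}}\sum_{t=\tau_{L-m}+1}^{d_j}y_j(t)$ over all allocations $y_j:\{1,\dots,d_j\}\to\{0,\dots,k_j\}$ ($T_j\in\mathcal{S}$) with $\sum_{t\le d_j}y_j(t)\le D_j$ for each $T_j$ and $\sum_{T_j\in\mathcal{S}}y_j(t)\le C$ for each slot $t$.
   Context: There are $C$ identical machines and a finite set $\mathcal{T}$ of tasks; $\mathcal{S}\subseteq\mathcal{T}$. Task $T_j$ has workload $D_j\in\mathbb{Z}^+$, deadline $d_j\in\mathbb{Z}^+$ and parallelism bound $k_j\in\mathbb{Z}^+$; it can only be processed in slots $1,\dots,d_j$ and on at most $k_j$ machines per slot. Time slots are $1,\dots,d$ with $d=\max_j d_j$. Let $len_j=\lceil D_j/k_j\rceil$, and let $0=\tau_0<\tau_1<\dots<\tau_L=d$ where $\{\tau_1,\dots,\tau_L\}$ is the set of distinct deadlines of tasks in $\mathcal{T}$. For $m\in\{0,\dots,L\}$ define $\lambda_m(\mathcal{S})=\sum_{T_j\in\mathcal{S},\,d_j>\tau_{L-m}} c_j^{(m)}$, where $c_j^{(m)}=D_j$ if $len_j\le d_j-\tau_{L-m}$ and $c_j^{(m)}=k_j(d_j-\tau_{L-m})$ otherwise. Define $\lambda_0^C(\mathcal{S})=0$ and for $m=1,\dots,L$: $\lambda_m^C(\mathcal{S})=\lambda_{m-1}^C(\mathcal{S})+\min\{\lambda_m(\mathcal{S})-\lambda_{m-1}^C(\mathcal{S}),\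 C(\tau_{L-m+1}-\tau_{L-m})\}$. *)

theory Defs
  imports Complex_Main
begin

text \<open>Tasks are elements of a type 'a; the task set is a finite set T.
  D j = workload, dl j = deadline, k j = parallelism bound.\<close>

definition nL :: "'a set \<Rightarrow> ('a \<Rightarrow> nat) \<Rightarrow> nat" where
  "nL T dl = card (dl ` T)"

definition tau :: "'a set \<Rightarrow> ('a \<Rightarrow> nat) \<Rightarrow> nat \<Rightarrow> nat" where
  "tau T dl i = (0 # sorted_list_of_set (dl ` T)) ! i"

definition len :: "nat \<Rightarrow> nat \<Rightarrow> nat" where
  "len Dj kj = nat \<lceil>real Dj / real kj\<rceil>"

definition lam :: "'a set \<Rightarrow> 'a set \<Rightarrow> ('a \<Rightarrow> nat) \<Rightarrow> ('a \<Rightarrow> nat) \<Rightarrow> ('a \<Rightarrow> nat) \<Rightarrow> nat \<Rightarrow> int" where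
  "lam T S D dl k m =
     (let t0 = tau T dl (nL T dl - m) in
      (\<Sum>j\<in>{j\<in>S. dl j > t0}.
         (if len (D j) (k j) \<le> dl j - t0 then int (D j) else int (k j * (dl j - t0)))))"

fun lamC :: "nat \<Rightarrow> 'a set \<Rightarrow> 'a set \<Rightarrow> ('a \<Rightarrow> nat) \<Rightarrow> ('a \<Rightarrow> nat) \<Rightarrow> ('a \<Rightarrow> nat) \<Rightarrow> nat \<Rightarrow> int" where
  "lamC C T S D dl k 0 = 0"
| "lamC C T S D dl k (Suc m) =
     lamC C T S D dl k m
     + min (lam T S D dl k (Suc m) - lamC C T S D dl k m)
           (int C * (int (tau T dl (nL T dl - m)) - int (tau T dl (nL T dl - Suc m))))"

text \<open>Feasible allocations of the tasks in S: y j t is the number of machines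
  given to task j in slot t (only slots 1..dl j are meaningful).\<close>
definition feasible_alloc :: "nat \<Rightarrow> 'a set \<Rightarrow> ('a \<Rightarrow> nat) \<Rightarrow> ('a \<Rightarrow> nat) \<Rightarrow> ('a \<Rightarrow> nat)
    \<Rightarrow> ('a \<Rightarrow> nat \<Rightarrow> nat) \<Rightarrow> bool" where
  "feasible_alloc C S D dl k y \<longleftrightarrow>
     (\<forall>j\<in>S. \<forall>t\<in>{1..dl j}. y j t \<le> k j) \<and>
     (\<forall>j\<in>S. (\<Sum>t\<in>{1..dl j}. y j t) \<le> D j) \<and>
     (\<forall>t. (\<Sum>j\<in>{j\<in>S. t \<le> dl j}. y j t) \<le> C)"

definition processed_after :: "'a set \<Rightarrow> ('a \<Rightarrow> nat) \<Rightarrow> nat \<Rightarrow> ('a \<Rightarrow> nat \<Rightarrow> nat) \<Rightarrow> int" where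
  "processed_after S dl s y = int (\<Sum>j\<in>S. \<Sum>t\<in>{s+1..dl j}. y j t)"

definition max_processed_after :: "nat \<Rightarrow> 'a set \<Rightarrow> ('a \<Rightarrow> nat) \<Rightarrow> ('a \<Rightarrow> nat) \<Rightarrow> ('a \<Rightarrow> nat)
    \<Rightarrow> nat \<Rightarrow> int" where
  "max_processed_after C S D dl k s =
     Max {processed_after S dl s y | y. feasible_alloc C S D dl k y}"

end

theory Submission
  imports Defs
begin

text \<open>Write s = tau(L-m). A feasible allocation does at most lambda_m(S) work after s (every
  task on its own), and at most C (tau(L-m+1) - s) more than it does after tau(L-m+1); the
  recursion for lambda^C_m takes exactly the minimum of these two bounds, so induction on m
  bounds the maximum from above. Conversely, lambda^C_m is at most every cut value
  C (p - s) + sum_j min(D_j, k_j (d_j - p)) with s <= p <= d, because between consecutive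
  deadlines each summand is a capped affine, hence concave, function of p. A schedule attaining
  the minimal cut is built slot by slot: the allocation of slot s + 1 can be raised one machine
  at a time so that the work placed plus the minimal cut of the remaining problem grows by
  exactly one per step, until C machines are used or the minimal cut of the whole problem is
  reached.\<close>

lemma tau_mono:
  assumes "finite T" "i \<le> i'" "i' \<le> nL T dl"
  shows "tau T dl i \<le> tau T dl i'"
proof -
  have "length (sorted_list_of_set (dl ` T)) = nL T dl" using assms(1) by (simp add: nL_def)
  moreover have "sorted (0 # sorted_list_of_set (dl ` T))" by simp
  ultimately show ?thesis unfolding tau_def by (intro sorted_nth_mono) (use assms in auto)
qed

lemma deadline_eq_tau:
  assumes "finite T" "j \<in> T"
  obtains q where "1 \<le> q" "q \<le> nL T dl" "dl j = tau T dl q"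
proof -
  let ?Ds = "sorted_list_of_set (dl ` T)"
  have len: "length ?Ds = nL T dl" using assms(1) by (simp add: nL_def)
  have "dl j \<in> set ?Ds" using assms by simp
  then obtain q' where "q' < length ?Ds" "?Ds ! q' = dl j" by (metis in_set_conv_nth)
  then show ?thesis using len by (intro that[of "Suc q'"]) (auto simp: tau_def)
qed

lemma deadline_le_tau_last:
  assumes "finite T" "j \<in> T"
  shows "dl j \<le> tau T dl (nL T dl)"
  using assms by (metis deadline_eq_tau order_refl tau_mono)

lemma deadline_not_between_taus:
  assumes "finite T" "j \<in> T" "i < nL T dl"
  shows "dl j \<le> tau T dl i \<or> tau T dl (Suc i) \<le> dl j"
proof -
  obtain q where q: "1 \<le> q" "q \<le> nL T dl" "dl j = tau T dl q"
    using deadline_eq_tau[OF assms(1,2)] by blast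
  show ?thesis
  proof (cases "q \<le> i")
    case True then show ?thesis using tau_mono[OF assms(1), of q i] q assms(3) by auto
  next
    case False then show ?thesis using tau_mono[OF assms(1), of "Suc i" q] q by auto
  qed
qed

lemma len_le_iff:
  assumes "kj > 0"
  shows "len Dj kj \<le> x \<longleftrightarrow> Dj \<le> kj * x"
proof -
  have "len Dj kj \<le> x \<longleftrightarrow> \<lceil>real Dj / real kj\<rceil> \<le> int x" unfolding len_def by linarith
  also have "\<dots> \<longleftrightarrow> real Dj \<le> real kj * real x"
    using assms by (simp add: ceiling_le_iff divide_le_eq mult.commute)
  also have "\<dots> \<longleftrightarrow> Dj \<le> kj * x" by (metis of_nat_le_iff of_nat_mult)
  finally show ?thesis .
qed

lemma lamC_Suc_eq_min:
  assumes "finite T" "Suc m \<le> nL T dl"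
  shows "lamC C T S D dl k (Suc m) = min (lam T S D dl k (Suc m))
      (lamC C T S D dl k m + int (C * (tau T dl (nL T dl - m) - tau T dl (nL T dl - Suc m))))"
proof -
  have "tau T dl (nL T dl - Suc m) \<le> tau T dl (nL T dl - m)"
    by (rule tau_mono) (use assms in auto)
  then show ?thesis by simp
qed

lemma least_argmin:
  fixes f :: "nat \<Rightarrow> 'b::linorder"
  assumes "finite P" "P \<noteq> {}"
  obtains p0 where "p0 \<in> P" "f p0 = Min (f ` P)" "\<And>p. p \<in> P \<Longrightarrow> p < p0 \<Longrightarrow> Min (f ` P) < f p"
proof -
  have "Min (f ` P) \<in> f ` P" using assms by (intro Min_in) auto
  then have ex: "\<exists>p. p \<in> P \<and> f p = Min (f ` P)" by auto
  define p0 where "p0 = (LEAST p. p \<in> P \<and> f p = Min (f ` P))"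
  have p0: "p0 \<in> P" "f p0 = Min (f ` P)" using LeastI_ex[OF ex] unfolding p0_def by auto
  have "Min (f ` P) < f p" if "p \<in> P" "p < p0" for p
    using Min_le[of "f ` P" "f p"] not_less_Least[OF that(2)[unfolded p0_def]] assms that(1)
    by fastforce
  with p0 show ?thesis using that by blast
qed

context
  fixes C :: nat and S :: "'a set" and dl k :: "'a \<Rightarrow> nat"
  assumes finite_S: "finite S"
begin

definition uncapacitated_after :: "('a \<Rightarrow> nat) \<Rightarrow> nat \<Rightarrow> nat" where
  "uncapacitated_after r p = (\<Sum>j\<in>S. min (r j) (k j * (dl j - p)))"

lemma lam_eq_uncapacitated_after:
  assumes "\<forall>j\<in>S. k j > 0"
  shows "lam T S D dl k m = int (uncapacitated_after D (tau T dl (nL T dl - m)))"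
proof -
  define s where "s = tau T dl (nL T dl - m)"
  have "lam T S D dl k m = (\<Sum>j\<in>{j\<in>S. dl j > s}. int (min (D j) (k j * (dl j - s))))"
    unfolding lam_def Let_def s_def[symmetric]
    by (rule sum.cong) (use assms len_le_iff in auto)
  also have "\<dots> = (\<Sum>j\<in>S. int (min (D j) (k j * (dl j - s))))"
    by (rule sum.mono_neutral_left) (use finite_S in auto)
  finally show ?thesis unfolding uncapacitated_after_def s_def by (simp only: of_nat_sum)
qed

lemma processed_after_le_uncapacitated_after:
  assumes "feasible_alloc C S D dl k y"
  shows "processed_after S dl s y \<le> int (uncapacitated_after D s)"
  unfolding processed_after_def uncapacitated_after_def of_nat_le_iff
proof (intro sum_mono min.boundedI)
  fix j assume j: "j \<in> S"
  have "(\<Sum>t\<in>{s+1..dl j}. y j t) \<le> (\<Sum>t\<in>{1..dl j}. y j t)" by (rule sum_mono2) auto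
  also have "\<dots> \<le> D j" using assms j unfolding feasible_alloc_def by blast
  finally show "(\<Sum>t\<in>{s+1..dl j}. y j t) \<le> D j" .
  have "(\<Sum>t\<in>{s+1..dl j}. y j t) \<le> (\<Sum>t\<in>{s+1..dl j}. k j)"
    by (rule sum_mono) (use assms j in \<open>auto simp: feasible_alloc_def\<close>)
  then show "(\<Sum>t\<in>{s+1..dl j}. y j t) \<le> k j * (dl j - s)" by (simp add: mult.commute)
qed

lemma processed_after_le_shift:
  assumes "feasible_alloc C S D dl k y" "s \<le> s'"
  shows "processed_after S dl s y \<le> int (C * (s' - s)) + processed_after S dl s' y"
proof -
  have split: "(\<Sum>t\<in>{s+1..dl j}. y j t)
      = (\<Sum>t\<in>{t\<in>{s+1..s'}. t \<le> dl j}. y j t) + (\<Sum>t\<in>{s'+1..dl j}. y j t)" for j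
  proof -
    have "{s+1..dl j} = {t\<in>{s+1..s'}. t \<le> dl j} \<union> {s'+1..dl j}" using assms(2) by auto
    then show ?thesis by (simp add: sum.union_disjoint[symmetric]) (subst sum.union_disjoint; auto)
  qed
  have "(\<Sum>j\<in>S. \<Sum>t\<in>{t\<in>{s+1..s'}. t \<le> dl j}. y j t)
      = (\<Sum>t\<in>{s+1..s'}. \<Sum>j\<in>{j\<in>S. t \<le> dl j}. y j t)"
    by (rule sum.swap_restrict) (use finite_S in auto)
  also have "\<dots> \<le> (\<Sum>t\<in>{s+1..s'}. C)"
    by (rule sum_mono) (use assms(1) in \<open>auto simp: feasible_alloc_def\<close>)
  finally have "(\<Sum>j\<in>S. \<Sum>t\<in>{t\<in>{s+1..s'}. t \<le> dl j}. y j t) \<le> C * (s' - s)" by (simp add: mult.commute)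
  then show ?thesis
    unfolding processed_after_def split sum.distrib of_nat_add[symmetric] of_nat_le_iff by simp
qed

lemma processed_after_le_lamC:
  assumes "finite T" "S \<subseteq> T" "\<forall>j\<in>S. k j > 0" "feasible_alloc C S D dl k y"
  shows "m \<le> nL T dl \<Longrightarrow> processed_after S dl (tau T dl (nL T dl - m)) y \<le> lamC C T S D dl k m"
proof (induction m)
  case 0
  have "dl j \<le> tau T dl (nL T dl)" if "j \<in> S" for j
    using deadline_le_tau_last[OF assms(1)] assms(2) that by blast
  then have "processed_after S dl (tau T dl (nL T dl)) y = 0"
    unfolding processed_after_def by (intro iffD2[OF of_nat_eq_0_iff] sum.neutral) (use Suc_le_eq in fastforce)
  then show ?case by simp
next
  case (Suc m)
  let ?a = "tau T dl (nL T dl - Suc m)" and ?b = "tau T dl (nL T dl - m)"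
  have "?a \<le> ?b" by (rule tau_mono) (use assms Suc in auto)
  then have "processed_after S dl ?a y \<le> lamC C T S D dl k m + int (C * (?b - ?a))"
    using processed_after_le_shift[OF assms(4)] Suc by fastforce
  moreover have "processed_after S dl ?a y \<le> lam T S D dl k (Suc m)"
    using processed_after_le_uncapacitated_after[OF assms(4)] lam_eq_uncapacitated_after[OF assms(3)]
    by simp
  ultimately show ?case using lamC_Suc_eq_min[OF assms(1) Suc.prems] by simp
qed

lemma capped_affine_concave:
  fixes a b p e c R :: nat
  assumes "a \<le> p" "p \<le> b" "e \<le> a \<or> b \<le> e"
  shows "(b - p) * min R (c * (e - a)) + (p - a) * min R (c * (e - b)) \<le> (b - a) * min R (c * (e - p))"
proof (cases "e \<le> a")
  case True
  then show ?thesis using assms by simp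
next
  case False
  then have "b \<le> e" using assms by auto
  show ?thesis
  proof (cases "R \<le> c * (e - p)")
    case True
    have "(b - p) * min R (c * (e - a)) + (p - a) * min R (c * (e - b)) \<le> (b - p) * R + (p - a) * R"
      by (intro add_mono mult_le_mono2) auto
    also have "\<dots> = (b - a) * R" using assms by (simp add: add_mult_distrib[symmetric])
    finally show ?thesis using True by simp
  next
    case False
    have "(b - p) * min R (c * (e - a)) + (p - a) * min R (c * (e - b))
        \<le> (b - p) * (c * (e - a)) + (p - a) * (c * (e - b))"
      by (intro add_mono mult_le_mono2) auto
    also have "\<dots> = (b - a) * (c * (e - p))"
    proof -
      have "int ((b - p) * (c * (e - a)) + (p - a) * (c * (e - b)))
          = (int b - int p) * (int c * (int e - int a)) + (int p - int a) * (int c * (int e - int b))"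
        using assms \<open>b \<le> e\<close> by simp
      also have "\<dots> = (int b - int a) * (int c * (int e - int p))" by (simp add: algebra_simps)
      also have "\<dots> = int ((b - a) * (c * (e - p)))" using assms \<open>b \<le> e\<close> by simp
      finally show ?thesis by (simp only: of_nat_eq_iff)
    qed
    finally show ?thesis using False by simp
  qed
qed

lemma uncapacitated_after_interpolation:
  assumes "a \<le> p" "p \<le> b" "\<forall>j\<in>S. dl j \<le> a \<or> b \<le> dl j"
  shows "min (uncapacitated_after r a) (C * (b - a) + uncapacitated_after r b)
      \<le> C * (p - a) + uncapacitated_after r p"
proof (cases "a = b")
  case True
  then show ?thesis using assms by simp
next
  case False
  define M where "M = min (uncapacitated_after r a) (C * (b - a) + uncapacitated_after r b)"
  have concave: "(b - p) * uncapacitated_after r a + (p - a) * uncapacitated_after r b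
      \<le> (b - a) * uncapacitated_after r p"
    unfolding uncapacitated_after_def sum_distrib_left sum.distrib[symmetric]
    by (rule sum_mono) (use assms capped_affine_concave in auto)
  have "(b - a) * M = (b - p) * M + (p - a) * M" using assms by (simp add: add_mult_distrib[symmetric])
  also have "\<dots> \<le> (b - p) * uncapacitated_after r a + (p - a) * (C * (b - a) + uncapacitated_after r b)"
    unfolding M_def by (intro add_mono mult_le_mono2) auto
  also have "\<dots> = (b - p) * uncapacitated_after r a + (p - a) * uncapacitated_after r b
      + (b - a) * (C * (p - a))"
    by (simp add: add_mult_distrib2 mult.commute mult.left_commute)
  also have "\<dots> \<le> (b - a) * (C * (p - a) + uncapacitated_after r p)"
    using concave by (simp add: add_mult_distrib2)
  finally show ?thesis unfolding M_def using False assms by simp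
qed

definition cut_value :: "('a \<Rightarrow> nat) \<Rightarrow> nat \<Rightarrow> nat \<Rightarrow> nat" where
  "cut_value r s p = C * (p - s) + uncapacitated_after r p"

definition min_cut :: "('a \<Rightarrow> nat) \<Rightarrow> nat \<Rightarrow> nat \<Rightarrow> nat" where
  "min_cut r s d = Min (cut_value r s ` {s..d})"

lemma lamC_le_cut_value:
  assumes "finite T" "S \<subseteq> T" "\<forall>j\<in>S. k j > 0"
  shows "m \<le> nL T dl \<Longrightarrow> p \<in> {tau T dl (nL T dl - m)..tau T dl (nL T dl)} \<Longrightarrow>
     lamC C T S D dl k m \<le> int (cut_value D (tau T dl (nL T dl - m)) p)"
proof (induction m arbitrary: p)
  case 0
  then show ?case by simp
next
  case (Suc m)
  let ?a = "tau T dl (nL T dl - Suc m)" and ?b = "tau T dl (nL T dl - m)"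
    and ?d = "tau T dl (nL T dl)"
  have ab: "?a \<le> ?b" and bd: "?b \<le> ?d" by (rule tau_mono; use assms Suc in auto)+
  have lamC_Suc: "lamC C T S D dl k (Suc m)
      = min (int (uncapacitated_after D ?a)) (lamC C T S D dl k m + int (C * (?b - ?a)))"
    using lamC_Suc_eq_min[OF assms(1) Suc.prems(1)] lam_eq_uncapacitated_after[OF assms(3)]
    by (simp only:)
  show ?case
  proof (cases "?b \<le> p")
    case True
    then have "lamC C T S D dl k m \<le> int (C * (p - ?b) + uncapacitated_after D p)"
      using Suc by (auto simp: cut_value_def)
    moreover have "C * (p - ?a) = C * (p - ?b) + C * (?b - ?a)"
      using True ab by (simp add: diff_mult_distrib2)
    ultimately show ?thesis unfolding lamC_Suc cut_value_def by linarith
  next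
    case False
    have "lamC C T S D dl k m \<le> int (uncapacitated_after D ?b)"
      using Suc.IH[of ?b] Suc.prems bd by (simp add: cut_value_def)
    moreover have "\<forall>j\<in>S. dl j \<le> ?a \<or> ?b \<le> dl j"
      using deadline_not_between_taus[OF assms(1), of _ "nL T dl - Suc m"] assms(2) Suc.prems
      by (simp add: Suc_diff_Suc subset_iff)
    then have "min (uncapacitated_after D ?a) (C * (?b - ?a) + uncapacitated_after D ?b)
        \<le> C * (p - ?a) + uncapacitated_after D p"
      by (rule uncapacitated_after_interpolation[rotated 2]) (use Suc.prems False in auto)
    ultimately show ?thesis unfolding lamC_Suc cut_value_def by linarith
  qed
qed

lemma min_cut_le: "p \<in> {s..d} \<Longrightarrow> min_cut r s d \<le> cut_value r s p"
  unfolding min_cut_def by (rule Min_le) auto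

lemma lamC_le_min_cut:
  assumes "finite T" "S \<subseteq> T" "\<forall>j\<in>S. k j > 0" "m \<le> nL T dl"
  shows "lamC C T S D dl k m \<le> int (min_cut D (tau T dl (nL T dl - m)) (tau T dl (nL T dl)))"
proof -
  have "tau T dl (nL T dl - m) \<le> tau T dl (nL T dl)" by (rule tau_mono) (use assms in auto)
  then have "min_cut D (tau T dl (nL T dl - m)) (tau T dl (nL T dl))
      \<in> cut_value D (tau T dl (nL T dl - m)) ` {tau T dl (nL T dl - m)..tau T dl (nL T dl)}"
    unfolding min_cut_def by (intro Min_in) auto
  then show ?thesis using lamC_le_cut_value[OF assms] by auto
qed

text \<open>For \<open>x \<le> r\<close>, \<open>min_shifted_cut r s d x\<close> is the work \<open>x\<close> placed in slot \<open>s + 1\<close> plus the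
  minimal cut of the residual problem after that slot (\<open>min_shifted_cut_eq\<close>); unlike the
  latter form it is visibly monotone in \<open>x\<close>.\<close>
definition shifted_cut :: "('a \<Rightarrow> nat) \<Rightarrow> nat \<Rightarrow> ('a \<Rightarrow> nat) \<Rightarrow> nat \<Rightarrow> nat" where
  "shifted_cut r s x p = C * (p - Suc s) + (\<Sum>j\<in>S. min (r j) (k j * (dl j - p) + x j))"

definition min_shifted_cut :: "('a \<Rightarrow> nat) \<Rightarrow> nat \<Rightarrow> nat \<Rightarrow> ('a \<Rightarrow> nat) \<Rightarrow> nat" where
  "min_shifted_cut r s d x = Min (shifted_cut r s x ` {Suc s..d})"

lemma min_shifted_cut_le: "p \<in> {Suc s..d} \<Longrightarrow> min_shifted_cut r s d x \<le> shifted_cut r s x p"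
  unfolding min_shifted_cut_def by (rule Min_le) auto

lemma min_shifted_cut_attained:
  assumes "s < d"
  obtains p where "p \<in> {Suc s..d}" "min_shifted_cut r s d x = shifted_cut r s x p"
proof -
  have "min_shifted_cut r s d x \<in> shifted_cut r s x ` {Suc s..d}"
    unfolding min_shifted_cut_def by (intro Min_in) (use assms in auto)
  then show ?thesis using that by blast
qed

lemma min_shifted_cut_greatest:
  "s < d \<Longrightarrow> (\<And>p. p \<in> {Suc s..d} \<Longrightarrow> v \<le> shifted_cut r s x p) \<Longrightarrow> v \<le> min_shifted_cut r s d x"
  unfolding min_shifted_cut_def by (subst Min_ge_iff) auto

lemma min_shifted_cut_mono:
  assumes "s < d" "\<forall>j\<in>S. x j \<le> u j"
  shows "min_shifted_cut r s d x \<le> min_shifted_cut r s d u"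
proof -
  obtain p where p: "p \<in> {Suc s..d}" "min_shifted_cut r s d u = shifted_cut r s u p"
    using min_shifted_cut_attained[OF assms(1)] .
  have "shifted_cut r s x p \<le> shifted_cut r s u p"
    unfolding shifted_cut_def by (intro add_mono order_refl sum_mono) (use assms(2) in \<open>auto simp: min_def\<close>)
  then show ?thesis using min_shifted_cut_le[OF p(1), of r x] p(2) by simp
qed

lemma shifted_cut_increment:
  assumes "j \<in> S"
  shows "shifted_cut r s (x(j := Suc (x j))) p
      = shifted_cut r s x p + (if k j * (dl j - p) + x j < r j then 1 else 0)"
proof -
  have "(\<Sum>i\<in>S. min (r i) (k i * (dl i - p) + (x(j := Suc (x j))) i))
      = (\<Sum>i\<in>S. min (r i) (k i * (dl i - p) + x i)
          + (if i = j then (if k j * (dl j - p) + x j < r j then 1 else 0) else 0))"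
    by (rule sum.cong) auto
  then show ?thesis using assms finite_S by (simp add: shifted_cut_def sum.distrib)
qed

lemma min_shifted_cut_unit_step:
  assumes "s < d" "\<forall>j\<in>S. x j \<le> u j" "min_shifted_cut r s d x < min_shifted_cut r s d u"
  obtains j where "j \<in> S" "x j < u j"
    "min_shifted_cut r s d (x(j := Suc (x j))) = Suc (min_shifted_cut r s d x)"
proof -
  let ?G = "min_shifted_cut r s d x"
  obtain p0 where p0: "p0 \<in> {Suc s..d}" "shifted_cut r s x p0 = ?G"
      and before_p0: "\<And>p. p \<in> {Suc s..d} \<Longrightarrow> p < p0 \<Longrightarrow> ?G < shifted_cut r s x p"
    using least_argmin[of "{Suc s..d}" "shifted_cut r s x"] assms(1)
    unfolding min_shifted_cut_def by auto
  have "shifted_cut r s x p0 < shifted_cut r s u p0"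
    using p0 assms(3) min_shifted_cut_le[OF p0(1), of r u] by simp
  then obtain j where j: "j \<in> S"
      "min (r j) (k j * (dl j - p0) + x j) < min (r j) (k j * (dl j - p0) + u j)"
    unfolding shifted_cut_def using sum_mono[of S] by (meson add_less_cancel_left not_le)
  then have xu: "x j < u j" and room: "k j * (dl j - p0) + x j < r j" by auto
  have "shifted_cut r s (x(j := Suc (x j))) p0 = Suc ?G"
    using shifted_cut_increment[OF j(1), of r s x p0] room p0(2) by simp
  then have "min_shifted_cut r s d (x(j := Suc (x j))) \<le> Suc ?G"
    using min_shifted_cut_le[OF p0(1), of r "x(j := Suc (x j))"] by simp
  moreover have "Suc ?G \<le> min_shifted_cut r s d (x(j := Suc (x j)))"
  proof (rule min_shifted_cut_greatest[OF assms(1)])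
    fix p assume p: "p \<in> {Suc s..d}"
    show "Suc ?G \<le> shifted_cut r s (x(j := Suc (x j))) p"
    proof (cases "p < p0")
      case True
      then show ?thesis using before_p0[OF p] shifted_cut_increment[OF j(1)] by simp
    next
      case False
      then have "k j * (dl j - p) \<le> k j * (dl j - p0)" by (intro mult_le_mono2) simp
      then have "k j * (dl j - p) + x j < r j" using room by linarith
      then show ?thesis using min_shifted_cut_le[OF p] shifted_cut_increment[OF j(1)] by simp
    qed
  qed
  ultimately show ?thesis using that j(1) xu by simp
qed

lemma min_shifted_cut_intermediate_value:
  assumes "s < d"
  shows "min_shifted_cut r s d (\<lambda>_. 0) + n \<le> min_shifted_cut r s d u \<Longrightarrow>
    \<exists>x. (\<forall>j\<in>S. x j \<le> u j) \<and> sum x S = n \<and> min_shifted_cut r s d x = min_shifted_cut r s d (\<lambda>_. 0) + n"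
proof (induction n)
  case 0
  then show ?case by (intro exI[of _ "\<lambda>_. 0"]) auto
next
  case (Suc n)
  then obtain x where x: "\<forall>j\<in>S. x j \<le> u j" "sum x S = n"
      "min_shifted_cut r s d x = min_shifted_cut r s d (\<lambda>_. 0) + n"
    by auto
  then have "min_shifted_cut r s d x < min_shifted_cut r s d u" using Suc.prems by simp
  then obtain j where j: "j \<in> S" "x j < u j"
      "min_shifted_cut r s d (x(j := Suc (x j))) = Suc (min_shifted_cut r s d x)"
    using min_shifted_cut_unit_step[OF assms x(1)] by blast
  have "sum (x(j := Suc (x j))) S = Suc n" using x(2) j(1) finite_S by (simp add: sum.remove)
  moreover have "\<forall>i\<in>S. (x(j := Suc (x j))) i \<le> u i" using x(1) j(2) by auto
  moreover have "min_shifted_cut r s d (x(j := Suc (x j))) = min_shifted_cut r s d (\<lambda>_. 0) + Suc n"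
    using j(3) x(3) by simp
  ultimately show ?case by blast
qed

lemma min_shifted_cut_eq:
  assumes "s < d" "\<forall>j\<in>S. x j \<le> r j"
  shows "min_shifted_cut r s d x = sum x S + min_cut (\<lambda>j. r j - x j) (Suc s) d"
proof -
  have "sum x S + cut_value (\<lambda>j. r j - x j) (Suc s) p = shifted_cut r s x p" for p
  proof -
    have "sum x S + uncapacitated_after (\<lambda>j. r j - x j) p
        = (\<Sum>j\<in>S. x j + min (r j - x j) (k j * (dl j - p)))"
      by (simp add: uncapacitated_after_def sum.distrib)
    also have "\<dots> = (\<Sum>j\<in>S. min (r j) (k j * (dl j - p) + x j))"
      by (rule sum.cong) (use assms(2) in auto)
    finally show ?thesis unfolding cut_value_def shifted_cut_def by simp
  qed
  then have "shifted_cut r s x ` {Suc s..d} = (+) (sum x S) ` cut_value (\<lambda>j. r j - x j) (Suc s) ` {Suc s..d}"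
    by (simp add: image_image)
  moreover have "sum x S + Min (cut_value (\<lambda>j. r j - x j) (Suc s) ` {Suc s..d})
      = Min ((+) (sum x S) ` cut_value (\<lambda>j. r j - x j) (Suc s) ` {Suc s..d})"
    by (rule mono_Min_commute) (use assms(1) in \<open>auto simp: mono_def\<close>)
  ultimately show ?thesis unfolding min_shifted_cut_def min_cut_def by simp
qed

lemma min_cut_le_min_shifted_cut_zero:
  assumes "s < d"
  shows "min_cut r s d \<le> min_shifted_cut r s d (\<lambda>_. 0) + C"
proof -
  obtain p where p: "p \<in> {Suc s..d}" "min_shifted_cut r s d (\<lambda>_. 0) = shifted_cut r s (\<lambda>_. 0) p"
    using min_shifted_cut_attained[OF assms] .
  then have "p - s = Suc (p - Suc s)" by (simp add: Suc_diff_Suc)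
  then have "shifted_cut r s (\<lambda>_. 0) p + C = cut_value r s p"
    by (simp add: shifted_cut_def cut_value_def uncapacitated_after_def)
  moreover have "min_cut r s d \<le> cut_value r s p" by (rule min_cut_le) (use p in auto)
  ultimately show ?thesis using p by simp
qed

definition max_slot_alloc :: "('a \<Rightarrow> nat) \<Rightarrow> nat \<Rightarrow> 'a \<Rightarrow> nat" where
  "max_slot_alloc r s j = (if dl j \<le> s then 0 else min (k j) (r j))"

lemma le_max_slot_allocD: "x \<le> max_slot_alloc r s j \<Longrightarrow> x \<le> k j \<and> x \<le> r j"
  by (simp add: max_slot_alloc_def split: if_splits)

lemma min_cut_le_min_shifted_cut_max:
  assumes "s < d"
  shows "min_cut r s d \<le> min_shifted_cut r s d (max_slot_alloc r s)"
proof -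
  obtain p where p: "p \<in> {Suc s..d}"
      "min_shifted_cut r s d (max_slot_alloc r s) = shifted_cut r s (max_slot_alloc r s) p"
    using min_shifted_cut_attained[OF assms] .
  have "min (r j) (k j * (dl j - (p - 1))) \<le> min (r j) (k j * (dl j - p) + max_slot_alloc r s j)" for j
  proof (cases "dl j \<le> s")
    case True
    then show ?thesis using p by (simp add: max_slot_alloc_def)
  next
    case False
    have "k j * (dl j - (p - 1)) \<le> k j * ((dl j - p) + 1)" by (intro mult_le_mono2) simp
    then show ?thesis using False by (auto simp: max_slot_alloc_def min_def)
  qed
  then have "cut_value r s (p - 1) \<le> shifted_cut r s (max_slot_alloc r s) p"
    unfolding cut_value_def shifted_cut_def uncapacitated_after_def by (intro add_mono sum_mono) auto
  moreover have "min_cut r s d \<le> cut_value r s (p - 1)" by (rule min_cut_le) (use p in auto)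
  ultimately show ?thesis using p by simp
qed

lemma first_slot_alloc:
  assumes "s < d"
  obtains x where "\<forall>j\<in>S. x j \<le> max_slot_alloc r s j" "sum x S \<le> C"
    "min_cut r s d \<le> sum x S + min_cut (\<lambda>j. r j - x j) (Suc s) d"
proof -
  let ?g0 = "min_shifted_cut r s d (\<lambda>_. 0)" and ?gu = "min_shifted_cut r s d (max_slot_alloc r s)"
  have "?g0 \<le> ?gu" by (rule min_shifted_cut_mono[OF assms]) auto
  then have "?g0 + min C (?gu - ?g0) \<le> ?gu" by simp
  then have "\<exists>x. (\<forall>j\<in>S. x j \<le> max_slot_alloc r s j) \<and> sum x S = min C (?gu - ?g0)
      \<and> min_shifted_cut r s d x = ?g0 + min C (?gu - ?g0)"
    by (rule min_shifted_cut_intermediate_value[OF assms])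
  then obtain x where x: "\<forall>j\<in>S. x j \<le> max_slot_alloc r s j" "sum x S = min C (?gu - ?g0)"
      "min_shifted_cut r s d x = ?g0 + min C (?gu - ?g0)"
    by blast
  have "\<forall>j\<in>S. x j \<le> r j" using x(1) le_max_slot_allocD by blast
  then have "min_shifted_cut r s d x = sum x S + min_cut (\<lambda>j. r j - x j) (Suc s) d"
    by (rule min_shifted_cut_eq[OF assms])
  moreover have "min_cut r s d \<le> min_shifted_cut r s d x"
    using x(3) \<open>?g0 \<le> ?gu\<close> min_cut_le_min_shifted_cut_zero[OF assms, of r]
      min_cut_le_min_shifted_cut_max[OF assms, of r]
    by (simp add: min_def)
  ultimately show ?thesis using that x(1,2) by simp
qed

definition schedule_after :: "('a \<Rightarrow> nat) \<Rightarrow> nat \<Rightarrow> ('a \<Rightarrow> nat \<Rightarrow> nat) \<Rightarrow> bool" where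
  "schedule_after r s y \<longleftrightarrow>
     (\<forall>j\<in>S. \<forall>t. y j t \<le> k j) \<and> (\<forall>j\<in>S. (\<Sum>t\<in>{Suc s..dl j}. y j t) \<le> r j) \<and>
     (\<forall>j t. t \<le> s \<longrightarrow> y j t = 0) \<and> (\<forall>t. (\<Sum>j\<in>{j\<in>S. t \<le> dl j}. y j t) \<le> C)"

lemma schedule_after_prepend_slot:
  assumes y': "schedule_after (\<lambda>j. r j - x j) (Suc s) y'"
    and x: "\<forall>j\<in>S. x j \<le> max_slot_alloc r s j" "sum x S \<le> C"
  defines "y \<equiv> \<lambda>j t. if t = Suc s then x j else y' j t"
  shows "schedule_after r s y" "processed_after S dl s y = int (sum x S) + processed_after S dl (Suc s) y'"
proof -
  have split: "(\<Sum>t\<in>{Suc s..dl j}. y j t) = x j + (\<Sum>t\<in>{Suc (Suc s)..dl j}. y' j t)" if "j \<in> S" for j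
  proof (cases "dl j \<le> s")
    case True
    then have "x j = 0" using x(1) that by (auto simp: max_slot_alloc_def)
    then show ?thesis using True by simp
  next
    case False
    then have "{Suc s..dl j} = insert (Suc s) {Suc (Suc s)..dl j}" by auto
    moreover have "(\<Sum>t\<in>{Suc (Suc s)..dl j}. y j t) = (\<Sum>t\<in>{Suc (Suc s)..dl j}. y' j t)"
      by (rule sum.cong) (auto simp: y_def)
    ultimately show ?thesis by (simp add: y_def)
  qed
  then show "processed_after S dl s y = int (sum x S) + processed_after S dl (Suc s) y'"
    by (simp add: processed_after_def sum.distrib)
  have "(\<Sum>j\<in>{j\<in>S. Suc s \<le> dl j}. x j) \<le> sum x S" by (rule sum_mono2) (use finite_S in auto)
  then have "(\<Sum>j\<in>{j\<in>S. t \<le> dl j}. y j t) \<le> C" for t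
    using y' x(2) by (cases "t = Suc s") (auto simp: schedule_after_def y_def)
  moreover have "x j \<le> k j" "x j \<le> r j" if "j \<in> S" for j
    using x(1) that le_max_slot_allocD by blast+
  ultimately show "schedule_after r s y"
    using y' split unfolding schedule_after_def by (fastforce simp: y_def)
qed

lemma ex_schedule_after_ge_min_cut:
  assumes "\<forall>j\<in>S. dl j \<le> d"
  shows "s \<le> d \<Longrightarrow> \<exists>y. schedule_after r s y \<and> int (min_cut r s d) \<le> processed_after S dl s y"
proof (induction "d - s" arbitrary: s r)
  case 0
  then have "s = d" by simp
  then have "min_cut r s d \<le> 0"
    using min_cut_le[of d s d r] assms by (simp add: cut_value_def uncapacitated_after_def)
  then show ?case by (intro exI[of _ "\<lambda>_ _. 0"]) (simp add: schedule_after_def processed_after_def)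
next
  case (Suc n)
  then have "s < d" by simp
  then obtain x where x: "\<forall>j\<in>S. x j \<le> max_slot_alloc r s j" "sum x S \<le> C"
      "min_cut r s d \<le> sum x S + min_cut (\<lambda>j. r j - x j) (Suc s) d"
    using first_slot_alloc by blast
  obtain y' where y': "schedule_after (\<lambda>j. r j - x j) (Suc s) y'"
      "int (min_cut (\<lambda>j. r j - x j) (Suc s) d) \<le> processed_after S dl (Suc s) y'"
    using Suc.hyps(1)[of "Suc s"] Suc.hyps(2) \<open>s < d\<close> by fastforce
  let ?y = "\<lambda>j t. if t = Suc s then x j else y' j t"
  have "int (min_cut r s d) \<le> int (sum x S) + int (min_cut (\<lambda>j. r j - x j) (Suc s) d)"
    using x(3) by linarith
  then have "int (min_cut r s d) \<le> processed_after S dl s ?y"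
    using schedule_after_prepend_slot(2)[OF y'(1) x(1,2)] y'(2) by linarith
  then show ?case using schedule_after_prepend_slot(1)[OF y'(1) x(1,2)] by blast
qed

lemma schedule_after_feasible:
  assumes "schedule_after D s y"
  shows "feasible_alloc C S D dl k y"
proof -
  have "(\<Sum>t\<in>{1..dl j}. y j t) = (\<Sum>t\<in>{Suc s..dl j}. y j t)" for j
    by (rule sum.mono_neutral_right) (use assms in \<open>auto simp: schedule_after_def\<close>)
  then show ?thesis using assms unfolding schedule_after_def feasible_alloc_def by auto
qed

end

lemma max_processed_after_eqI:
  assumes "\<And>y. feasible_alloc C S D dl k y \<Longrightarrow> processed_after S dl s y \<le> v"
    and "feasible_alloc C S D dl k y0" "processed_after S dl s y0 = v"
  shows "max_processed_after C S D dl k s = v"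
proof -
  let ?X = "{processed_after S dl s y | y. feasible_alloc C S D dl k y}"
  have "?X \<subseteq> {0..v}" using assms(1) by (auto simp: processed_after_def sum_nonneg)
  then have "finite ?X" by (rule finite_subset) simp
  moreover have "v \<in> ?X" using assms(2,3) by blast
  ultimately show ?thesis
    unfolding max_processed_after_def using assms(1) by (intro Max_eqI) auto
qed

theorem lemma1:
  fixes T S :: "'a set" and C :: nat and D dl k :: "'a \<Rightarrow> nat" and m :: nat
  assumes "finite T" and "S \<subseteq> T"
    and "\<forall>j\<in>T. D j > 0 \<and> dl j > 0 \<and> k j > 0"
    and "1 \<le> m" and "m \<le> nL T dl"
  shows "lamC C T S D dl k m = max_processed_after C S D dl k (tau T dl (nL T dl - m))"
proof -
  let ?s = "tau T dl (nL T dl - m)" and ?d = "tau T dl (nL T dl)"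
  have finite_S: "finite S" using assms(1,2) finite_subset by blast
  have k_pos: "\<forall>j\<in>S. k j > 0" using assms(2,3) by blast
  have "?s \<le> ?d" by (rule tau_mono) (use assms in auto)
  moreover have "\<forall>j\<in>S. dl j \<le> ?d" using deadline_le_tau_last[OF assms(1)] assms(2) by blast
  ultimately obtain y where y: "schedule_after C S dl k D ?s y"
      "int (min_cut C S dl k D ?s ?d) \<le> processed_after S dl ?s y"
    using ex_schedule_after_ge_min_cut[OF finite_S] by blast
  have upper: "processed_after S dl ?s z \<le> lamC C T S D dl k m" if "feasible_alloc C S D dl k z" for z
    using processed_after_le_lamC[OF finite_S assms(1,2) k_pos that assms(5)] .
  have feasible: "feasible_alloc C S D dl k y" by (rule schedule_after_feasible[OF finite_S y(1)])
  have "lamC C T S D dl k m \<le> processed_after S dl ?s y"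
    using lamC_le_min_cut[OF finite_S assms(1,2) k_pos assms(5), where C = C and D = D] y(2) by linarith
  then have "processed_after S dl ?s y = lamC C T S D dl k m"
    using upper[OF feasible] by (rule antisym[symmetric])
  then show ?thesis using max_processed_after_eqI[OF upper feasible] by simp
qed

end
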